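(* For every $x\in\mathbb R$, $|e^{ix}-1-ix-(ix)^2/2|\le\varkappa x^2$, where $\varkappa=x^{-2}\sqrt{(\cos x-1+x^2/2)^2+(\sin x-x)^2}\big|_{x=x_0}=0.531551\ldots$ and $x_0=5.487414\ldots$ is the unique root of $8(\cos x-1)+8x\sin x-4x^2\cos x-x^3\sin x=0$ on $(0,2\pi]$, which lies in $(\pi,2\pi)$. *)

theory Defs
  imports Complex_Main
begin

definition lemma3_g :: "real \<Rightarrow> real" where
  "lemma3_g x = 8 * (cos x - 1) + 8 * x * sin x - 4 * x^2 * cos x - x^3 * sin x"

definition lemma3_x0 :: real where
  "lemma3_x0 = (THE x. 0 < x \<and> x \<le> 2 * pi \<and> lemma3_g x = 0)"

definition lemma3_kappa :: real where
  "lemma3_kappa = (let x = lemma3_x0 in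
     sqrt ((cos x - 1 + x^2 / 2)^2 + (sin x - x)^2) / x^2)"

end

theory Submission
  imports Defs "HOL-Analysis.Complex_Transcendental"
begin

text \<open>
  Write \<open>R(x) = |e^{ix} - 1 - ix - (ix)^2/2|^2\<close>. Then
  \<open>(R(x)/x^4)' = g(x)/x^5\<close> with \<open>g = lemma3_g\<close>, and \<open>g'(x) = x^2 (sin x - x cos x)\<close>.
  The factor \<open>sin x - x cos x\<close> is positive up to some point of \<open>(\<pi>, 2\<pi>)\<close> and negative
  after it, so \<open>g\<close>, which vanishes at 0 and is negative at \<open>2\<pi>\<close>, has exactly one zero
  \<open>x\<^sub>0\<close> in \<open>(0, 2\<pi>]\<close>, where \<open>R(x)/x^4\<close> attains its maximum over \<open>(0, 2\<pi>]\<close>.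
  For \<open>x \<ge> 2\<pi>\<close> the crude bound \<open>R(x) \<le> x^4/4 + x^2 + 4\<close> suffices, and \<open>R\<close> is even.
  The numerical values follow from Taylor enclosures of sine and cosine at \<open>2\<pi> - x\<close>.
\<close>

definition expi_rem_sq :: "real \<Rightarrow> real" where
  "expi_rem_sq x = (cos x - 1 + x^2/2)^2 + (sin x - x)^2"

definition expi_rem_ratio :: "real \<Rightarrow> real" where
  "expi_rem_ratio x = expi_rem_sq x / x^4"

lemma norm_expi_taylor2_eq:
  "cmod (exp (\<i> * of_real x) - 1 - \<i> * of_real x - (\<i> * of_real x)^2 / 2) = sqrt (expi_rem_sq x)"
  by (simp add: norm_complex_def expi_rem_sq_def Re_exp Im_exp power2_eq_square)

lemma expi_rem_sq_minus: "expi_rem_sq (-x) = expi_rem_sq x"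
  by (simp add: expi_rem_sq_def power2_eq_square algebra_simps)

lemma expi_rem_sq_expand: "expi_rem_sq x = x^4/4 + x^2 * cos x - 2 * x * sin x + 2 - 2 * cos x"
proof -
  have "sin x ^ 2 = 1 - cos x ^ 2" by (simp add: sin_squared_eq)
  then show ?thesis
    unfolding expi_rem_sq_def by (simp add: power2_eq_square algebra_simps eval_nat_numeral)
qed

lemma expi_rem_sq_le_quartic: "expi_rem_sq x \<le> x^4/4 + x^2 + 4"
proof -
  have "((x^2-2) * cos x - 2*x * sin x)^2 + ((x^2-2) * sin x + 2*x * cos x)^2
      = (x^4 + 4) * (sin x ^2 + cos x ^2)"
    by algebra
  then have "((x^2-2) * cos x - 2*x * sin x)^2 \<le> x^4 + 4"
    by (metis le_add_same_cancel1 mult.right_neutral sin_cos_squared_add zero_le_power2)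
  also have "\<dots> \<le> (x^2 + 2)^2" by (simp add: power2_eq_square eval_nat_numeral algebra_simps)
  finally have "(x^2-2) * cos x - 2*x * sin x \<le> x^2 + 2"
    by (rule power2_le_imp_le) simp
  then show ?thesis unfolding expi_rem_sq_expand by (simp add: algebra_simps)
qed

lemma expi_rem_sq_le_large:
  assumes x: "2*pi \<le> x" and K: "0.2825 \<le> K"
  shows "expi_rem_sq x \<le> K * x^4"
proof -
  have "36 \<le> x^2" using power_mono[of 6 x 2] x pi_gt3 by simp
  moreover from this have "36 * x^2 \<le> x^2 * x^2" by (intro mult_right_mono) auto
  ultimately have "x^2 + 4 \<le> 13/400 * (x^2 * x^2)" by linarith
  also have "\<dots> \<le> (K - 1/4) * (x^2 * x^2)" using K by (intro mult_right_mono) auto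
  finally show ?thesis
    using expi_rem_sq_le_quartic[of x] by (simp add: algebra_simps eval_nat_numeral)
qed

lemma sin_minus_x_cos_has_derivative:
  "((\<lambda>x. sin x - x * cos x) has_real_derivative x * sin x) (at x)"
  by (auto intro!: derivative_eq_intros simp: algebra_simps)

lemma lemma3_g_has_derivative:
  "(lemma3_g has_real_derivative x^2 * (sin x - x * cos x)) (at x)"
  unfolding lemma3_g_def[abs_def]
  by (auto intro!: derivative_eq_intros simp: algebra_simps eval_nat_numeral)

lemma expi_rem_ratio_has_derivative:
  assumes "x \<noteq> 0"
  shows "(expi_rem_ratio has_real_derivative lemma3_g x / x^5) (at x)"
  unfolding expi_rem_ratio_def[abs_def] expi_rem_sq_expand lemma3_g_def using assms
  by (auto intro!: derivative_eq_intros simp: field_simps eval_nat_numeral)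

lemma continuous_on_lemma3_g: "continuous_on S lemma3_g"
  unfolding lemma3_g_def[abs_def] by (intro continuous_intros)

lemma sin_minus_x_cos_pos:
  assumes "0 < x" "x \<le> pi"
  shows "0 < sin x - x * cos x"
proof -
  have "sin 0 - 0 * cos 0 < sin x - x * cos x"
  proof (rule DERIV_pos_imp_increasing_open[OF assms(1)])
    fix y assume "0 < y" "y < x"
    then have "0 < y * sin y" using assms sin_gt_zero[of y] by simp
    then show "\<exists>d. ((\<lambda>x. sin x - x * cos x) has_real_derivative d) (at y) \<and> 0 < d"
      using sin_minus_x_cos_has_derivative by blast
  qed (intro continuous_intros)
  then show ?thesis by simp
qed

lemma sin_minus_x_cos_strict_decreasing:
  assumes "pi \<le> u" "u < v" "v \<le> 2*pi"
  shows "sin v - v * cos v < sin u - u * cos u"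
proof (rule DERIV_neg_imp_decreasing_open[OF assms(2)])
  fix y assume "u < y" "y < v"
  then have "y * sin y < 0" using assms sin_lt_zero[of y] pi_gt_zero by (intro mult_pos_neg) auto
  then show "\<exists>d. ((\<lambda>x. sin x - x * cos x) has_real_derivative d) (at y) \<and> d < 0"
    using sin_minus_x_cos_has_derivative by blast
qed (intro continuous_intros)

lemma sin_minus_x_cos_sign_change:
  obtains r where "pi < r" "r < 2*pi"
    "\<And>y. 0 < y \<Longrightarrow> y < r \<Longrightarrow> 0 < sin y - y * cos y"
    "\<And>y. r < y \<Longrightarrow> y \<le> 2*pi \<Longrightarrow> sin y - y * cos y < 0"
proof -
  have "\<exists>r. pi \<le> r \<and> r \<le> 2*pi \<and> sin r - r * cos r = 0"
    by (rule IVT2'[where f = "\<lambda>x. sin x - x * cos x"]) (auto intro!: continuous_intros)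
  then obtain r where r: "pi \<le> r" "r \<le> 2*pi" "sin r - r * cos r = 0" by blast
  have "r \<noteq> pi" "r \<noteq> 2*pi" using r pi_gt_zero by auto
  with r have r': "pi < r" "r < 2*pi" by auto
  show ?thesis
  proof (rule that[OF r'])
    fix y assume "0 < y" "y < r"
    then show "0 < sin y - y * cos y"
      using sin_minus_x_cos_pos[of y] sin_minus_x_cos_strict_decreasing[of y r] r
      by (cases "y \<le> pi") auto
  next
    fix y assume "r < y" "y \<le> 2*pi"
    then show "sin y - y * cos y < 0" using sin_minus_x_cos_strict_decreasing[of r y] r' r by auto
  qed
qed

lemma lemma3_g_sign_change:
  obtains z where "pi < z" "z < 2*pi" "lemma3_g z = 0"
    "\<And>x. 0 < x \<Longrightarrow> x < z \<Longrightarrow> 0 < lemma3_g x"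
    "\<And>x. z < x \<Longrightarrow> x \<le> 2*pi \<Longrightarrow> lemma3_g x < 0"
proof -
  obtain r where r: "pi < r" "r < 2*pi"
    and pos: "\<And>y. 0 < y \<Longrightarrow> y < r \<Longrightarrow> 0 < sin y - y * cos y"
    and neg: "\<And>y. r < y \<Longrightarrow> y \<le> 2*pi \<Longrightarrow> sin y - y * cos y < 0"
    using sin_minus_x_cos_sign_change by blast
  have increasing: "lemma3_g u < lemma3_g v" if "0 \<le> u" "u < v" "v \<le> r" for u v
    by (rule DERIV_pos_imp_increasing_open[OF that(2) _ continuous_on_lemma3_g])
       (use that pos lemma3_g_has_derivative in force)
  have decreasing: "lemma3_g v < lemma3_g u" if "r \<le> u" "u < v" "v \<le> 2*pi" for u v
    by (rule DERIV_neg_imp_decreasing_open[OF that(2) _ continuous_on_lemma3_g])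
       (use that r neg lemma3_g_has_derivative pi_gt_zero in \<open>force intro!: mult_pos_neg\<close>)
  have gr: "0 < lemma3_g r" using increasing[of 0 r] r pi_gt_zero by (simp add: lemma3_g_def)
  have g2pi: "lemma3_g (2*pi) < 0" by (simp add: lemma3_g_def)
  have "\<exists>z. r \<le> z \<and> z \<le> 2*pi \<and> lemma3_g z = 0"
    by (rule IVT2'[OF _ _ _ continuous_on_lemma3_g]) (use gr g2pi r in auto)
  then obtain z where z: "r \<le> z" "z \<le> 2*pi" "lemma3_g z = 0" by blast
  have "r \<noteq> z" "z \<noteq> 2*pi" using z gr g2pi by auto
  with z r have z': "r < z" "z < 2*pi" by auto
  show ?thesis
  proof (rule that)
    show "pi < z" "z < 2*pi" "lemma3_g z = 0" using z z' r by auto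
    fix x assume "0 < x" "x < z"
    then show "0 < lemma3_g x"
      using increasing[of 0 x] decreasing[of x z] z by (cases "x \<le> r") (auto simp: lemma3_g_def)
  next
    fix x assume "z < x" "x \<le> 2*pi"
    then show "lemma3_g x < 0" using decreasing[of z x] z z' by auto
  qed
qed

lemma lemma3_g_unique_root: "\<exists>!x. 0 < x \<and> x \<le> 2 * pi \<and> lemma3_g x = 0"
proof -
  obtain z where z: "pi < z" "z < 2*pi" "lemma3_g z = 0"
    and pos: "\<And>x. 0 < x \<Longrightarrow> x < z \<Longrightarrow> 0 < lemma3_g x"
    and neg: "\<And>x. z < x \<Longrightarrow> x \<le> 2*pi \<Longrightarrow> lemma3_g x < 0"
    using lemma3_g_sign_change by blast
  have "y = z" if "0 < y" "y \<le> 2 * pi" "lemma3_g y = 0" for y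
    using that pos[of y] neg[of y] by (cases y z rule: linorder_cases) auto
  with z pi_gt_zero show ?thesis by (intro ex1I[of _ z]) auto
qed

lemma lemma3_x0_between_pi_2pi: "pi < lemma3_x0 \<and> lemma3_x0 < 2*pi"
  and lemma3_g_x0: "lemma3_g lemma3_x0 = 0"
  and lemma3_g_pos_iff: "0 < x \<Longrightarrow> x \<le> 2*pi \<Longrightarrow> 0 < lemma3_g x \<longleftrightarrow> x < lemma3_x0"
  and lemma3_g_neg_iff: "0 < x \<Longrightarrow> x \<le> 2*pi \<Longrightarrow> lemma3_g x < 0 \<longleftrightarrow> lemma3_x0 < x"
proof -
  obtain z where z: "pi < z" "z < 2*pi" "lemma3_g z = 0"
    and pos: "\<And>x. 0 < x \<Longrightarrow> x < z \<Longrightarrow> 0 < lemma3_g x"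
    and neg: "\<And>x. z < x \<Longrightarrow> x \<le> 2*pi \<Longrightarrow> lemma3_g x < 0"
    using lemma3_g_sign_change by blast
  have "lemma3_x0 = z"
    unfolding lemma3_x0_def using z pi_gt_zero
    by (intro the1_equality[OF lemma3_g_unique_root]) auto
  then show "pi < lemma3_x0 \<and> lemma3_x0 < 2*pi" "lemma3_g lemma3_x0 = 0" using z by simp_all
  show "0 < lemma3_g x \<longleftrightarrow> x < lemma3_x0" "lemma3_g x < 0 \<longleftrightarrow> lemma3_x0 < x"
    if "0 < x" "x \<le> 2*pi"
    using that pos[of x] neg[of x] z \<open>lemma3_x0 = z\<close>
    by (cases x z rule: linorder_cases; fastforce)+
qed

lemma sums_alternating_bounds:
  fixes a :: "nat \<Rightarrow> real"
  assumes sums: "(\<lambda>k. (-1)^k * a k) sums s"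
    and nonneg: "\<And>k. 0 \<le> a k" and antimono: "\<And>k. a (Suc k) \<le> a k"
  shows "(\<Sum>k<2*n. (-1)^k * a k) \<le> s" and "s \<le> (\<Sum>k<2*n+1. (-1)^k * a k)"
proof -
  have "(\<lambda>k. \<bar>(-1)^k * a k\<bar>) \<longlonglongrightarrow> 0"
    by (rule tendsto_rabs_zero[OF summable_LIMSEQ_zero[OF sums_summable[OF sums]]])
  then have "a \<longlonglongrightarrow> 0" using nonneg by (simp add: abs_mult)
  note Leibniz = summable_Leibniz'[OF this nonneg antimono]
  have "(\<Sum>k. (-1)^k * a k) = s" using sums by (simp add: sums_iff)
  then show "(\<Sum>k<2*n. (-1)^k * a k) \<le> s" "s \<le> (\<Sum>k<2*n+1. (-1)^k * a k)"
    using Leibniz(2,4)[of n] by simp_all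
qed

lemma power_div_fact_antimono:
  fixes x :: real
  assumes "0 \<le> x" "x \<le> 1" "m \<le> n"
  shows "x^n / fact n \<le> x^m / fact m"
  using assms by (intro frac_le) (auto simp: power_decreasing fact_mono)

lemma sin_alternating_bounds:
  fixes x :: real
  assumes "0 \<le> x" "x \<le> 1"
  shows "(\<Sum>k<2*n. (-1)^k * (x^(2*k+1) / fact (2*k+1))) \<le> sin x"
    and "sin x \<le> (\<Sum>k<2*n+1. (-1)^k * (x^(2*k+1) / fact (2*k+1)))"
proof -
  have "(\<lambda>k. (-1)^k * (x^(2*k+1) / fact (2*k+1))) sums sin x"
    using sin_paired[of x] by simp
  moreover have "0 \<le> x^(2*k+1) / fact (2*k+1)" for k using assms by simp
  moreover have "x^(2*Suc k+1) / fact (2*Suc k+1) \<le> x^(2*k+1) / fact (2*k+1)" for k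
    using assms by (intro power_div_fact_antimono) auto
  ultimately show "(\<Sum>k<2*n. (-1)^k * (x^(2*k+1) / fact (2*k+1))) \<le> sin x"
    and "sin x \<le> (\<Sum>k<2*n+1. (-1)^k * (x^(2*k+1) / fact (2*k+1)))"
    by (rule sums_alternating_bounds)+
qed

lemma cos_alternating_bounds:
  fixes x :: real
  assumes "0 \<le> x" "x \<le> 1"
  shows "(\<Sum>k<2*n. (-1)^k * (x^(2*k) / fact (2*k))) \<le> cos x"
    and "cos x \<le> (\<Sum>k<2*n+1. (-1)^k * (x^(2*k) / fact (2*k)))"
proof -
  have "(\<lambda>k. (-1)^k * (x^(2*k) / fact (2*k))) sums cos x"
    using cos_paired[of x] by simp
  moreover have "0 \<le> x^(2*k) / fact (2*k)" for k using assms by simp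
  moreover have "x^(2*Suc k) / fact (2*Suc k) \<le> x^(2*k) / fact (2*k)" for k
    using assms by (intro power_div_fact_antimono) auto
  ultimately show "(\<Sum>k<2*n. (-1)^k * (x^(2*k) / fact (2*k))) \<le> cos x"
    and "cos x \<le> (\<Sum>k<2*n+1. (-1)^k * (x^(2*k) / fact (2*k)))"
    by (rule sums_alternating_bounds)+
qed

lemma sin_enclosure:
  fixes t :: real
  assumes "0 \<le> l" "l \<le> t" "t \<le> u" "u \<le> 1"
  shows "(\<Sum>k<2*n. (-1)^k * (l^(2*k+1) / fact (2*k+1))) \<le> sin t"
    and "sin t \<le> (\<Sum>k<2*n+1. (-1)^k * (u^(2*k+1) / fact (2*k+1)))"
proof -
  have "sin l \<le> sin t" "sin t \<le> sin u"
    using assms pi_gt3 by (intro sin_monotone_2pi_le; simp)+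
  then show "(\<Sum>k<2*n. (-1)^k * (l^(2*k+1) / fact (2*k+1))) \<le> sin t"
    and "sin t \<le> (\<Sum>k<2*n+1. (-1)^k * (u^(2*k+1) / fact (2*k+1)))"
    using sin_alternating_bounds[of l n] sin_alternating_bounds[of u n] assms by simp_all
qed

lemma cos_enclosure:
  fixes t :: real
  assumes "0 \<le> l" "l \<le> t" "t \<le> u" "u \<le> 1"
  shows "(\<Sum>k<2*n. (-1)^k * (u^(2*k) / fact (2*k))) \<le> cos t"
    and "cos t \<le> (\<Sum>k<2*n+1. (-1)^k * (l^(2*k) / fact (2*k)))"
proof -
  have "cos u \<le> cos t" "cos t \<le> cos l"
    using assms pi_gt3 by (intro cos_monotone_0_pi_le; simp)+
  then show "(\<Sum>k<2*n. (-1)^k * (u^(2*k) / fact (2*k))) \<le> cos t"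
    and "cos t \<le> (\<Sum>k<2*n+1. (-1)^k * (l^(2*k) / fact (2*k)))"
    using cos_alternating_bounds[of l n] cos_alternating_bounds[of u n] assms by simp_all
qed

lemma sin_cos_2pi_minus_5_487414:
  defines "t \<equiv> 2*pi - 5.487414"
  shows "0.714403522173 \<le> sin t" "sin t \<le> 0.714403529179"
    and "0.699733947517 \<le> cos t" "cos t \<le> 0.699733954797"
proof -
  have t: "0 \<le> (0.79577130::real)" "0.79577130 \<le> t" "t \<le> 0.79577131" "0.79577131 \<le> (1::real)"
    using pi_approx by (simp_all add: t_def)
  show "0.714403522173 \<le> sin t" using sin_enclosure(1)[OF t, of 3]
    by (simp add: eval_nat_numeral lessThan_Suc fact_numeral)
  show "sin t \<le> 0.714403529179" using sin_enclosure(2)[OF t, of 3]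
    by (simp add: eval_nat_numeral lessThan_Suc fact_numeral)
  show "0.699733947517 \<le> cos t" using cos_enclosure(1)[OF t, of 3]
    by (simp add: eval_nat_numeral lessThan_Suc fact_numeral)
  show "cos t \<le> 0.699733954797" using cos_enclosure(2)[OF t, of 3]
    by (simp add: eval_nat_numeral lessThan_Suc fact_numeral)
qed

lemma sin_cos_2pi_minus_5_487415:
  defines "t \<equiv> 2*pi - 5.487415"
  shows "sin t \<le> 0.714402829445" and "0.699734661921 \<le> cos t"
proof -
  have t: "0 \<le> (0.79577030::real)" "0.79577030 \<le> t" "t \<le> 0.79577031" "0.79577031 \<le> (1::real)"
    using pi_approx by (simp_all add: t_def)
  show "sin t \<le> 0.714402829445" using sin_enclosure(2)[OF t, of 3]
    by (simp add: eval_nat_numeral lessThan_Suc fact_numeral)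
  show "0.699734661921 \<le> cos t" using cos_enclosure(1)[OF t, of 3]
    by (simp add: eval_nat_numeral lessThan_Suc fact_numeral)
qed

lemma lemma3_g_reflect:
  "lemma3_g x = (8 - 4*x^2) * cos (2*pi - x) + (x^3 - 8*x) * sin (2*pi - x) - 8"
  by (simp add: lemma3_g_def sin_diff cos_diff algebra_simps)

lemma expi_rem_sq_reflect:
  "expi_rem_sq x = x^4/4 + (x^2 - 2) * cos (2*pi - x) + 2 * x * sin (2*pi - x) + 2"
  by (simp add: expi_rem_sq_expand sin_diff cos_diff algebra_simps)

lemma lemma3_g_5_487414_pos: "0 < lemma3_g 5.487414"
  using sin_cos_2pi_minus_5_487414 unfolding lemma3_g_reflect by (simp add: power_divide)

lemma lemma3_g_5_487415_neg: "lemma3_g 5.487415 < 0"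
  using sin_cos_2pi_minus_5_487415 unfolding lemma3_g_reflect by (simp add: power_divide)

text \<open>The slack \<open>0.00000009\<close> absorbs the growth of \<open>expi_rem_ratio\<close> between 5.487414 and
  \<open>lemma3_x0\<close>, which is below \<open>10\<^sup>-\<^sup>6 \<cdot> 2/25\<close> by \<open>expi_rem_ratio_increment_le\<close>.\<close>

lemma expi_rem_ratio_5_487414:
  "0.531551^2 \<le> expi_rem_ratio 5.487414" "expi_rem_ratio 5.487414 \<le> 0.531552^2 - 0.00000009"
  using sin_cos_2pi_minus_5_487414
  unfolding expi_rem_ratio_def expi_rem_sq_reflect by (simp_all add: field_simps)

lemma lemma3_x0_bounds: "5.487414 < lemma3_x0" "lemma3_x0 < 5.487415"
proof -
  have "5.487414 \<le> 2*pi" "5.487415 \<le> 2*pi" using pi_gt3 by simp_all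
  then show "5.487414 < lemma3_x0" "lemma3_x0 < 5.487415"
    using lemma3_g_pos_iff[of "5.487414"] lemma3_g_neg_iff[of "5.487415"]
      lemma3_g_5_487414_pos lemma3_g_5_487415_neg by simp_all
qed

lemma expi_rem_ratio_le_at_x0:
  assumes "0 < x" "x \<le> 2*pi"
  shows "expi_rem_ratio x \<le> expi_rem_ratio lemma3_x0"
proof (cases "x \<le> lemma3_x0")
  case True
  show ?thesis
  proof (rule DERIV_nonneg_imp_nondecreasing[OF True])
    fix y assume y: "x \<le> y" "y \<le> lemma3_x0"
    have "0 < y" "y \<le> 2*pi" using y assms lemma3_x0_between_pi_2pi by linarith+
    then have "0 \<le> lemma3_g y"
      using lemma3_g_pos_iff[of y] lemma3_g_x0 y by (cases "y = lemma3_x0") auto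
    with \<open>0 < y\<close> show "\<exists>d. (expi_rem_ratio has_real_derivative d) (at y) \<and> 0 \<le> d"
      using expi_rem_ratio_has_derivative[of y] by (intro exI[of _ "lemma3_g y / y^5"]) auto
  qed
next
  case False
  then have "lemma3_x0 \<le> x" by simp
  then show ?thesis
  proof (rule DERIV_nonpos_imp_nonincreasing)
    fix y assume y: "lemma3_x0 \<le> y" "y \<le> x"
    have "0 < y" "y \<le> 2*pi" using y assms lemma3_x0_between_pi_2pi pi_gt_zero by linarith+
    then have "lemma3_g y \<le> 0"
      using lemma3_g_neg_iff[of y] lemma3_g_x0 y by (cases "y = lemma3_x0") auto
    with \<open>0 < y\<close> show "\<exists>d. (expi_rem_ratio has_real_derivative d) (at y) \<and> d \<le> 0"
      using expi_rem_ratio_has_derivative[of y]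
      by (intro exI[of _ "lemma3_g y / y^5"]) (auto simp: divide_nonpos_pos)
  qed
qed

lemma lemma3_g_le_cubic:
  assumes "0 \<le> x"
  shows "lemma3_g x \<le> 8*x + 4*x^2 + x^3"
proof -
  have "8 * x * sin x \<le> 8 * x * 1" by (rule mult_left_mono) (use assms in auto)
  moreover have "4 * x^2 * (- cos x) \<le> 4 * x^2 * 1" by (rule mult_left_mono) auto
  moreover have "x^3 * (- sin x) \<le> x^3 * 1" by (rule mult_left_mono) (use assms in auto)
  moreover have "8 * (cos x - 1) \<le> 0" by simp
  ultimately show ?thesis unfolding lemma3_g_def by linarith
qed

lemma expi_rem_ratio_increment_le:
  assumes "27/5 \<le> a" "a \<le> z" "z \<le> 11/2"
  shows "expi_rem_ratio z - expi_rem_ratio a \<le> (z - a) * (2/25)"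
proof (cases "a = z")
  case False
  then have "a < z" using assms by simp
  moreover have "(expi_rem_ratio has_real_derivative lemma3_g x / x^5) (at x)" if "a \<le> x" for x
    using that assms by (intro expi_rem_ratio_has_derivative) auto
  ultimately obtain \<xi> where \<xi>: "a < \<xi>" "\<xi> < z"
    and mvt: "expi_rem_ratio z - expi_rem_ratio a = (z - a) * (lemma3_g \<xi> / \<xi>^5)"
    using MVT2[of a z expi_rem_ratio "\<lambda>x. lemma3_g x / x^5"] by blast
  have \<xi>_bounds: "27/5 \<le> \<xi>" "\<xi> \<le> 11/2" using \<xi> assms by linarith+
  have "\<xi>^2 \<le> (11/2)^2" "\<xi>^3 \<le> (11/2)^3" "(27/5)^5 \<le> \<xi>^5"
    using \<xi>_bounds by (intro power_mono; simp)+
  moreover have "8*(11/2) + 4*(11/2)^2 + (11/2)^3 \<le> 2/25 * (27/5::real)^5"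
    by (simp add: power_divide)
  ultimately have "8*\<xi> + 4*\<xi>^2 + \<xi>^3 \<le> 2/25 * \<xi>^5"
    using \<xi>_bounds by linarith
  then have "lemma3_g \<xi> / \<xi>^5 \<le> 2/25"
    using lemma3_g_le_cubic[of \<xi>] \<xi>_bounds by (simp add: pos_divide_le_eq)
  then show ?thesis
    unfolding mvt using \<xi> by (intro mult_left_mono) auto
qed simp

lemma real_sqrt_power4: "sqrt (x^4) = (x::real)^2"
  using real_sqrt_abs[of "x^2"] by (simp add: power_mult[symmetric])

lemma lemma3_kappa_eq: "lemma3_kappa = sqrt (expi_rem_ratio lemma3_x0)"
  unfolding lemma3_kappa_def expi_rem_ratio_def expi_rem_sq_def Let_def real_sqrt_divide
  by (simp add: real_sqrt_power4)

lemma lemma3_kappa_sq_bounds: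
  "0.531551^2 \<le> expi_rem_ratio lemma3_x0" "expi_rem_ratio lemma3_x0 < 0.531552^2"
proof -
  have "5.487414 \<le> 2*pi" using pi_gt3 by simp
  then show "0.531551^2 \<le> expi_rem_ratio lemma3_x0"
    using expi_rem_ratio_le_at_x0[of "5.487414"] expi_rem_ratio_5_487414(1) by simp
  have "expi_rem_ratio lemma3_x0 - expi_rem_ratio 5.487414 \<le> (lemma3_x0 - 5.487414) * (2/25)"
    using lemma3_x0_bounds by (intro expi_rem_ratio_increment_le) simp_all
  then show "expi_rem_ratio lemma3_x0 < 0.531552^2"
    using lemma3_x0_bounds expi_rem_ratio_5_487414(2) by simp
qed

lemma expi_rem_sq_le_at_x0: "expi_rem_sq x \<le> expi_rem_ratio lemma3_x0 * x^4"
proof -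
  have pos: "expi_rem_sq x \<le> expi_rem_ratio lemma3_x0 * x^4" if "0 < x" for x
  proof (cases "x \<le> 2*pi")
    case True
    then show ?thesis
      using expi_rem_ratio_le_at_x0[of x] \<open>0 < x\<close> by (simp add: expi_rem_ratio_def pos_divide_le_eq)
  next
    case False
    have "(0.2825::real) \<le> 0.531551^2" by (simp add: power_divide)
    then show ?thesis
      using False lemma3_kappa_sq_bounds(1) by (intro expi_rem_sq_le_large) auto
  qed
  consider "0 < x" | "x = 0" | "x < 0" by linarith
  then show ?thesis
    using pos[of x] pos[of "-x"] expi_rem_sq_minus[of x] by cases (simp_all add: expi_rem_sq_def)
qed

lemma lemma3_kappa_bounds: "0.531551 \<le> lemma3_kappa" "lemma3_kappa < 0.531552"
  unfolding lemma3_kappa_eq using lemma3_kappa_sq_bounds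
  by (intro real_le_rsqrt real_less_lsqrt; simp)+

lemma norm_expi_taylor2_le_kappa:
  "cmod (exp (\<i> * of_real x) - 1 - \<i> * of_real x - (\<i> * of_real x)^2 / 2) \<le> lemma3_kappa * x^2"
proof -
  have "sqrt (expi_rem_sq x) \<le> sqrt (expi_rem_ratio lemma3_x0 * x^4)"
    using expi_rem_sq_le_at_x0[of x] by simp
  then show ?thesis
    unfolding norm_expi_taylor2_eq lemma3_kappa_eq by (simp add: real_sqrt_mult real_sqrt_power4)
qed

theorem lemma3:
  shows "(\<exists>!x. 0 < x \<and> x \<le> 2 * pi \<and> lemma3_g x = 0)
    \<and> pi < lemma3_x0 \<and> lemma3_x0 < 2 * pi
    \<and> 5.487414 \<le> lemma3_x0 \<and> lemma3_x0 < 5.487415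
    \<and> 0.531551 \<le> lemma3_kappa \<and> lemma3_kappa < 0.531552
    \<and> (\<forall>x::real. cmod (exp (\<i> * of_real x) - 1 - \<i> * of_real x - (\<i> * of_real x)^2 / 2)
           \<le> lemma3_kappa * x^2)"
  using lemma3_g_unique_root lemma3_x0_between_pi_2pi lemma3_x0_bounds
    lemma3_kappa_bounds norm_expi_taylor2_le_kappa
  by (auto intro: less_imp_le)

end
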